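(* Let $m\ge2$, $Q=T_{(2^m)}$ and $K=K_Q(2)$. Let $M=\mathrm{diag}(a,a^{-1})X^b$ and $M'=\mathrm{diag}(a',a'^{-1})X^{b'}$ be elements of $K$ (with $\mathrm{diag}(a,a^{-1}),\mathrm{diag}(a',a'^{-1})\in Q$, $b,b'\in\{0,1\}$) such that $[M,M']=\pm\mathbbm{1}$. Then: (1) if $b=b'=0$, then $M,M'\in Q$ and $[M,M']=\mathbbm{1}$; (2) if $b=1$, $b'=0$, then $M'\in T_{(4)}$, and if moreover $[M,M']=\mathbbm{1}$ then $M'\in Z(K)$; (3) if $b=0$, $b'=1$, then $M\in T_{(4)}$, and if moreover $[M,M']=\mathbbm{1}$ then $M\in Z(K)$; (4) if $b=b'=1$, then $M=S_\chi M'$ for some $S_\chi\in T_{(4)}$, and if moreover $[M,M']=\mathbbm{1}$ then $M=\pm M'$.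
   Context: Let $\{|0\rangle,|1\rangle\}$ be the computational basis of $\mathbb{C}^2$ and $X|q\rangle=|q+1\bmod 2\rangle$. For $\xi:\mathbb{Z}_2\to U(1)$ let $S_\xi=\mathrm{diag}(\xi(0),\xi(1))$; $T=\{S_\xi:\xi(0)\xi(1)=1\}$ and $T_{(2^k)}=\{S\in T:S^{2^k}=\mathbbm{1}\}$. $K_Q(2)$ is the subgroup of $SU(2)$ generated by all $S_\xi X^b$ with $S_\xi\in Q$, $b\in\mathbb{Z}_2$. $Z(K)$ is the center of $K$. The commutator is $[A,B]=ABA^{-1}B^{-1}$. *)

theory Defs
  imports "HOL-Analysis.Analysis" "HOL-Library.Numeral_Type"
begin

text \<open>2x2 complex matrices, indexed by the type 2 = Z_2 (elements 0 and 1).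
  Basis vector |q> corresponds to index q.\<close>
type_synonym mat2 = "complex^2^2"

definition mpow :: "mat2 \<Rightarrow> nat \<Rightarrow> mat2" where
  "mpow A n = (((**) A) ^^ n) (mat 1)"

text \<open>Shift X |q> = |q+1 mod 2>, i.e. matrix entry (i,j) is 1 iff i = j + 1.\<close>
definition Xm :: mat2 where
  "Xm = (\<chi> i j. if i = j + 1 then 1 else 0)"

definition Sdiag :: "(2 \<Rightarrow> complex) \<Rightarrow> mat2" where
  "Sdiag \<xi> = (\<chi> i j. if i = j then \<xi> i else 0)"

definition diag2 :: "complex \<Rightarrow> complex \<Rightarrow> mat2" where
  "diag2 a a' = Sdiag (\<lambda>q. if q = 0 then a else a')"

definition Tgrp :: "mat2 set" where
  "Tgrp = {Sdiag \<xi> | \<xi>. (\<forall>q. cmod (\<xi> q) = 1) \<and> \<xi> 0 * \<xi> 1 = 1}"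

definition Tsub :: "nat \<Rightarrow> mat2 set" where
  "Tsub N = {S \<in> Tgrp. mpow S N = mat 1}"

inductive_set gen_grp :: "mat2 set \<Rightarrow> mat2 set" for G where
  one: "mat 1 \<in> gen_grp G"
| mul: "g \<in> gen_grp G \<Longrightarrow> x \<in> G \<Longrightarrow> g ** x \<in> gen_grp G"
| mulinv: "g \<in> gen_grp G \<Longrightarrow> x \<in> G \<Longrightarrow> g ** matrix_inv x \<in> gen_grp G"

definition KQ :: "mat2 set \<Rightarrow> mat2 set" where
  "KQ Q = gen_grp {S ** mpow Xm b | S b. S \<in> Q \<and> b \<le> 1}"

definition center :: "mat2 set \<Rightarrow> mat2 set" where
  "center K = {z \<in> K. \<forall>g \<in> K. z ** g = g ** z}"

definition commut :: "mat2 \<Rightarrow> mat2 \<Rightarrow> mat2" where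
  "commut A B = A ** B ** matrix_inv A ** matrix_inv B"

end

theory Submission
  imports Defs
begin

(* Every matrix here is monomial, diag(x, 1/x) X^b. A direct computation gives
   [diag(a, 1/a) X^b, diag(a', 1/a') X^b'] = diag(w^2, 1/w^2) with w = a^b' / a'^b.
   Hence [M, M'] = +-1 forces w^2 = +-1, so w^4 = 1, and [M, M'] = 1 forces w = +-1.
   If exactly one of b, b' is 1, then w or 1/w is the entry of whichever of M, M' is diagonal,
   so that matrix lies in T_(4), and is the central scalar +-1 when [M, M'] = 1.
   If b = b' = 1, then M = diag(w, 1/w) M'. The hypotheses m >= 2 and Q = T_(2^m) are used
   only through |a| = |a'| = 1. *)

(* The library's UNIV_2 names the elements of type 2 as 1 and 2; the definitions use 0 and 1. *)
lemma UNIV_2_eq_0_1: "(UNIV :: 2 set) = {0, 1}"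
proof -
  have "(2::2) = 0"
    by simp
  then show ?thesis
    using UNIV_2 by (metis insert_commute)
qed

lemma forall_2_eq_0_1: "(\<forall>i::2. P i) \<longleftrightarrow> P 0 \<and> P 1"
  by (metis UNIV_2_eq_0_1 UNIV_I insertE singletonD)

definition Mat2 :: "complex \<Rightarrow> complex \<Rightarrow> complex \<Rightarrow> complex \<Rightarrow> mat2" where
  "Mat2 p q r s = (\<chi> i j. if i = 0 then (if j = 0 then p else q) else (if j = 0 then r else s))"

lemma Mat2_eq_iff: "Mat2 p q r s = Mat2 p' q' r' s' \<longleftrightarrow> p = p' \<and> q = q' \<and> r = r' \<and> s = s'"
  by (simp add: Mat2_def vec_eq_iff forall_2_eq_0_1)

lemma Mat2_mult:
  "Mat2 p q r s ** Mat2 p' q' r' s' =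
     Mat2 (p * p' + q * r') (p * q' + q * s') (r * p' + s * r') (r * q' + s * s')"
  by (simp add: Mat2_def matrix_matrix_mult_def vec_eq_iff UNIV_2_eq_0_1 forall_2_eq_0_1)

lemma uminus_Mat2: "- Mat2 p q r s = Mat2 (- p) (- q) (- r) (- s)"
  by (simp add: Mat2_def vec_eq_iff)

lemma mat_eq_Mat2: "mat k = Mat2 k 0 0 k"
  by (simp add: Mat2_def mat_def vec_eq_iff forall_2_eq_0_1)

lemma diag2_eq_Mat2: "diag2 x y = Mat2 x 0 0 y"
  by (simp add: Mat2_def diag2_def Sdiag_def vec_eq_iff forall_2_eq_0_1)

lemma Sdiag_eq_diag2: "Sdiag \<xi> = diag2 (\<xi> 0) (\<xi> 1)"
  by (simp add: Sdiag_def diag2_eq_Mat2 Mat2_def vec_eq_iff forall_2_eq_0_1)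

lemma Xm_eq_Mat2: "Xm = Mat2 0 1 1 0"
  by (simp add: Mat2_def Xm_def vec_eq_iff forall_2_eq_0_1)

lemma uminus_mat: "- mat k = (mat (- k) :: 'a::ring_1^'n^'n)"
  by (simp add: mat_def vec_eq_iff)

lemma mat_mult_commute: "(mat k :: 'a::comm_semiring_1^'n^'n) ** A = A ** mat k"
  by (simp add: matrix_matrix_mult_def mat_def vec_eq_iff if_distrib if_distribR mult.commute
      cong: if_cong)

lemma mat_in_center: "mat k \<in> K \<Longrightarrow> mat k \<in> center K"
  by (simp add: center_def mat_mult_commute)

lemma matrix_inv_eqI:
  fixes A B :: "'a::semiring_1^'n^'n"
  assumes "A ** B = mat 1" and "B ** A = mat 1"
  shows "matrix_inv A = B"
proof -
  let ?C = "matrix_inv A"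
  have C: "A ** ?C = mat 1 \<and> ?C ** A = mat 1"
    unfolding matrix_inv_def by (rule someI[of _ B]) (use assms in blast)
  have "?C = (?C ** A) ** B"
    using assms(1) by (simp flip: matrix_mul_assoc)
  also have "\<dots> = B"
    using C by simp
  finally show ?thesis .
qed

lemma matrix_inv_Mat2_diag:
  "x \<noteq> 0 \<Longrightarrow> matrix_inv (Mat2 x 0 0 (inverse x)) = Mat2 (inverse x) 0 0 x"
  by (rule matrix_inv_eqI) (simp_all add: mat_eq_Mat2 Mat2_mult)

lemma matrix_inv_Mat2_antidiag:
  "x \<noteq> 0 \<Longrightarrow> matrix_inv (Mat2 0 x (inverse x) 0) = Mat2 0 x (inverse x) 0"
  by (rule matrix_inv_eqI) (simp_all add: mat_eq_Mat2 Mat2_mult)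

lemma mpow_0 [simp]: "mpow A 0 = mat 1"
  by (simp add: mpow_def)

lemma mpow_Suc: "mpow A (Suc n) = A ** mpow A n"
  by (simp add: mpow_def)

lemma mpow_diag2: "mpow (diag2 x y) n = diag2 (x ^ n) (y ^ n)"
  by (induction n) (simp_all add: mpow_Suc mat_eq_Mat2 diag2_eq_Mat2 Mat2_mult)

lemma diag2_eq_mat_iff: "diag2 x y = mat k \<longleftrightarrow> x = k \<and> y = k"
  by (simp add: diag2_eq_Mat2 mat_eq_Mat2 Mat2_eq_iff)

abbreviation tdiag :: "complex \<Rightarrow> mat2" where
  "tdiag x \<equiv> diag2 x (inverse x)"

lemma tdiag_mult: "tdiag x ** tdiag y = tdiag (x * y)"
  by (simp add: diag2_eq_Mat2 Mat2_mult mult.commute)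

lemma tdiag_eq_pm_mat_1: "x\<^sup>2 = 1 \<Longrightarrow> tdiag x = mat 1 \<or> tdiag x = - mat 1"
  by (auto simp: power2_eq_1_iff diag2_eq_mat_iff uminus_mat)

lemma tdiag_in_center: "tdiag x \<in> K \<Longrightarrow> x\<^sup>2 = 1 \<Longrightarrow> tdiag x \<in> center K"
  using tdiag_eq_pm_mat_1 mat_in_center by (fastforce simp: uminus_mat)

lemma tdiag_Xm_eq_tdiag_divide_mult:
  "y \<noteq> 0 \<Longrightarrow> tdiag x ** Xm = tdiag (x / y) ** (tdiag y ** Xm)"
  unfolding matrix_mul_assoc tdiag_mult by simp

lemma tdiag_Xm_eq_pm_if_power2_divide_eq_1:
  assumes "y \<noteq> 0" and "(x / y)\<^sup>2 = 1"
  shows "tdiag x ** Xm = tdiag y ** Xm \<or> tdiag x ** Xm = - (tdiag y ** Xm)"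
proof -
  from assms(2) have "x / y = 1 \<or> x / y = -1"
    by (simp add: power2_eq_1_iff)
  with assms(1) have "x = y \<or> x = - y"
    by (auto simp: field_simps)
  then show ?thesis
    by (auto simp: diag2_eq_Mat2 Xm_eq_Mat2 uminus_Mat2 Mat2_mult)
qed

lemma norm_eq_1_if_diag2_in_Tgrp: "diag2 x y \<in> Tgrp \<Longrightarrow> cmod x = 1"
  by (auto simp: Tgrp_def Sdiag_eq_diag2 diag2_eq_Mat2 Mat2_eq_iff)

lemma tdiag_in_Tsub:
  assumes "cmod x = 1" and "x ^ N = 1"
  shows "tdiag x \<in> Tsub N"
proof -
  have "x \<noteq> 0"
    using assms(1) by auto
  with assms(1) have "tdiag x \<in> Tgrp"
    unfolding Tgrp_def diag2_def
    by (intro CollectI exI[of _ "\<lambda>q. if q = 0 then x else inverse x"]) (auto simp: norm_inverse)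
  moreover have "mpow (tdiag x) N = mat 1"
    using assms(2) by (simp add: mpow_diag2 diag2_eq_mat_iff power_inverse)
  ultimately show ?thesis
    by (simp add: Tsub_def)
qed

lemma tdiag_in_Tsub_4:
  assumes "cmod x = 1" and "x\<^sup>2 = 1 \<or> x\<^sup>2 = -1"
  shows "tdiag x \<in> Tsub 4"
proof -
  from assms(2) have "x ^ 4 = 1"
    by (metis power_mult power_one numeral_Bit0 mult_2_right power2_minus)
  with assms(1) show ?thesis
    by (rule tdiag_in_Tsub)
qed

lemma commut_tdiag_mult_mpow_Xm:
  assumes "x \<noteq> 0" and "y \<noteq> 0" and "b \<le> 1" and "b' \<le> 1"
  shows "commut (tdiag x ** mpow Xm b) (tdiag y ** mpow Xm b') = tdiag ((x ^ b' / y ^ b)\<^sup>2)"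
proof -
  have "b = 0 \<or> b = 1" "b' = 0 \<or> b' = 1"
    using assms(3,4) by auto
  then show ?thesis
    using assms(1,2)
    \<comment> \<open>matrix inverses must be evaluated before field_simps turns inverse x into 1 / x\<close>
    by (elim disjE)
      (simp_all add: commut_def mpow_Suc diag2_eq_Mat2 Xm_eq_Mat2 Mat2_mult matrix_inv_Mat2_diag
        matrix_inv_Mat2_antidiag,
       simp_all add: mat_eq_Mat2 Mat2_eq_iff power2_eq_square field_simps)
qed

theorem lemma9:
  fixes m b b' :: nat and a a' :: complex and Q K :: "mat2 set" and M M' :: mat2
  assumes "m \<ge> 2"
    and "Q = Tsub (2 ^ m)"
    and "K = KQ Q"
    and "diag2 a (inverse a) \<in> Q" and "diag2 a' (inverse a') \<in> Q"
    and "b \<le> 1" and "b' \<le> 1"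
    and "M = diag2 a (inverse a) ** mpow Xm b"
    and "M' = diag2 a' (inverse a') ** mpow Xm b'"
    and "M \<in> K" and "M' \<in> K"
    and "commut M M' = mat 1 \<or> commut M M' = - mat 1"
  shows "(b = 0 \<and> b' = 0 \<longrightarrow> M \<in> Q \<and> M' \<in> Q \<and> commut M M' = mat 1)
    \<and> (b = 1 \<and> b' = 0 \<longrightarrow> M' \<in> Tsub 4 \<and> (commut M M' = mat 1 \<longrightarrow> M' \<in> center K))
    \<and> (b = 0 \<and> b' = 1 \<longrightarrow> M \<in> Tsub 4 \<and> (commut M M' = mat 1 \<longrightarrow> M \<in> center K))
    \<and> (b = 1 \<and> b' = 1 \<longrightarrow> (\<exists>S \<in> Tsub 4. M = S ** M')
         \<and> (commut M M' = mat 1 \<longrightarrow> M = M' \<or> M = - M'))"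
proof -
  have norm: "cmod a = 1" "cmod a' = 1"
    using assms(2,4,5) by (auto simp: Tsub_def intro: norm_eq_1_if_diag2_in_Tgrp)
  then have nonzero: "a \<noteq> 0" "a' \<noteq> 0"
    by auto
  define w where "w = a ^ b' / a' ^ b"
  have comm: "commut M M' = tdiag (w\<^sup>2)"
    using assms(6-9) nonzero by (simp add: w_def commut_tdiag_mult_mpow_Xm)
  have w_sq: "w\<^sup>2 = 1 \<or> w\<^sup>2 = -1"
    using assms(12) by (auto simp: comm diag2_eq_mat_iff uminus_mat)
  have w_sq_central: "w\<^sup>2 = 1" if "commut M M' = mat 1"
    using that by (simp add: comm diag2_eq_mat_iff)
  show ?thesis
  proof (intro conjI impI)
    assume "b = 0 \<and> b' = 0"
    then have "M = tdiag a" "M' = tdiag a'" "w = 1"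
      using assms(8,9) by (simp_all add: w_def)
    then show "M \<in> Q" "M' \<in> Q" "commut M M' = mat 1"
      using assms(4,5) comm by (simp_all add: diag2_eq_mat_iff)
  next
    assume "b = 1 \<and> b' = 0"
    then have M': "M' = tdiag a'" and "a'\<^sup>2 = inverse (w\<^sup>2)"
      using assms(9) by (simp_all add: w_def power_divide)
    with w_sq w_sq_central have "(a'\<^sup>2 = 1 \<or> a'\<^sup>2 = -1) \<and> (commut M M' = mat 1 \<longrightarrow> a'\<^sup>2 = 1)"
      by auto
    with M' norm assms(11) show "M' \<in> Tsub 4" and "commut M M' = mat 1 \<Longrightarrow> M' \<in> center K"
      by (auto intro: tdiag_in_Tsub_4 tdiag_in_center)
  next
    assume "b = 0 \<and> b' = 1"
    then have M: "M = tdiag a" and "w = a"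
      using assms(8) by (simp_all add: w_def)
    with w_sq w_sq_central norm assms(10) show "M \<in> Tsub 4" and "commut M M' = mat 1 \<Longrightarrow> M \<in> center K"
      by (auto intro: tdiag_in_Tsub_4 tdiag_in_center)
  next
    assume "b = 1 \<and> b' = 1"
    then have M: "M = tdiag a ** Xm" "M' = tdiag a' ** Xm" and w: "w = a / a'"
      using assms(8,9) by (simp_all add: w_def mpow_Suc)
    have "cmod w = 1"
      using norm by (simp add: w norm_divide)
    with w_sq have "tdiag w \<in> Tsub 4"
      by (intro tdiag_in_Tsub_4)
    then show "\<exists>S \<in> Tsub 4. M = S ** M'"
      using M w nonzero tdiag_Xm_eq_tdiag_divide_mult by blast
    show "M = M' \<or> M = - M'" if "commut M M' = mat 1"
      using M w w_sq_central[OF that] nonzero by (simp add: tdiag_Xm_eq_pm_if_power2_divide_eq_1)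
  qed
qed

end
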